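(* Let $p(L,M,D;\mu\to1)$ be a generative reasoning model, let $\alpha\in L$, and let $\Delta\subseteq L$ be finite. Then $p(\alpha\mid\Delta)=1$ if and only if $S\mathrel{|\!\!\equiv}\alpha$ for every cardinality-maximal possible subset $S$ of $\Delta$.
   Context: Fix a multiset of data $\{d_1,\dots,d_K\}$ with $K\ge1$, and a propositional language $L$ over finitely many atoms, with set of models (truth assignments) $\mathcal M$. A function $m:\{d_1,\dots,d_K\}\to\mathcal M$ assigns to each datum the model it supports. The probability of a model $n$ is $p(n)=|\{k:m(d_k)=n\}|/K$. For $\mu\in(0,1)$ and $\alpha\in L$, set $p(\alpha\mid m)=\mu$ if $m$ satisfies $\alpha$ and $1-\mu$ otherwise. For finite $\Delta$, set $p(\Delta\mid m)=\prod_{\beta\in\Delta}p(\beta\mid m)$, which is $1$ for empty $\Delta$. In $p(L,M,D;\mu\to1)$, $$p(\alpha\mid\Delta)=\lim_{\mu\to1^-}\frac{\sum_{m}p(\alpha\mid m)p(\Delta\mid m)p(m)}{\sum_m p(\Delta\mid m)p(m)}.$$ Notation and definitions: - For $S\subseteq L$, $[\![S]\!]$ is the set of models satisfying every formula of $S$, $[\![\alpha]\!]=[\![\{\alpha\}]\!]$, and $[\![S]\!]_p=\{m\in[\![S]\!]:p(m)\neq0\}$. - $S\mathrel{|\!\!\equiv}\alpha$ (empirical consequence) means $[\![S]\!]_p\subseteq[\![\alpha]\!]_p$. - $S\subseteq\Delta$ is a maximal possible subset of $\Delta$ if $[\![S]\!]_p\neq\emptyset$ and $[\![S\cup\{\beta\}]\!]_p=\emptyset$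 for all $\beta\in\Delta\setminus S$. - A cardinality-maximal possible subset is a maximal possible subset of maximum cardinality among all maximal possible subsets of $\Delta$. *)

theory Defs
  imports Complex_Main
begin

datatype 'a form =
    Atom 'a
  | Top
  | Bot
  | Neg "'a form"
  | Conj "'a form" "'a form"
  | Disj "'a form" "'a form"
  | Impl "'a form" "'a form"

type_synonym 'a model = "'a \<Rightarrow> bool"

fun sat :: "'a model \<Rightarrow> 'a form \<Rightarrow> bool" where
  "sat w (Atom a) = w a"
| "sat w Top = True"
| "sat w Bot = False"
| "sat w (Neg f) = (\<not> sat w f)"
| "sat w (Conj f g) = (sat w f \<and> sat w g)"
| "sat w (Disj f g) = (sat w f \<or> sat w g)"
| "sat w (Impl f g) = (sat w f \<longrightarrow> sat w g)"

text \<open>Data d_1..d_K are given as a list ds (a multiset with an enumeration);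
  mm assigns each datum the model it supports. p(n) = |{k. mm(d_k) = n}| / K.\<close>
definition prob :: "'d list \<Rightarrow> ('d \<Rightarrow> 'a model) \<Rightarrow> 'a model \<Rightarrow> real" where
  "prob ds mm n = real (length (filter (\<lambda>d. mm d = n) ds)) / real (length ds)"

definition lik :: "real \<Rightarrow> 'a form \<Rightarrow> 'a model \<Rightarrow> real" where
  "lik \<mu> \<alpha> w = (if sat w \<alpha> then \<mu> else 1 - \<mu>)"

definition likset :: "real \<Rightarrow> 'a form set \<Rightarrow> 'a model \<Rightarrow> real" where
  "likset \<mu> \<Delta> w = (\<Prod>\<beta>\<in>\<Delta>. lik \<mu> \<beta> w)"

text \<open>The ratio inside the limit defining p(alpha | Delta), for a fixed mu.\<close>
definition condp :: "'d list \<Rightarrow> ('d \<Rightarrow> ('a::finite) model) \<Rightarrow> real \<Rightarrow> 'a form \<Rightarrow> 'a form set \<Rightarrow> real" where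
  "condp ds mm \<mu> \<alpha> \<Delta> =
     (\<Sum>w\<in>UNIV. lik \<mu> \<alpha> w * likset \<mu> \<Delta> w * prob ds mm w) /
     (\<Sum>w\<in>UNIV. likset \<mu> \<Delta> w * prob ds mm w)"

definition models :: "'a form set \<Rightarrow> 'a model set" where
  "models S = {w. \<forall>\<beta>\<in>S. sat w \<beta>}"

definition models_p :: "'d list \<Rightarrow> ('d \<Rightarrow> 'a model) \<Rightarrow> 'a form set \<Rightarrow> 'a model set" where
  "models_p ds mm S = {w \<in> models S. prob ds mm w \<noteq> 0}"

definition emp_cons :: "'d list \<Rightarrow> ('d \<Rightarrow> 'a model) \<Rightarrow> 'a form set \<Rightarrow> 'a form \<Rightarrow> bool" where
  "emp_cons ds mm S \<alpha> \<longleftrightarrow> models_p ds mm S \<subseteq> models_p ds mm {\<alpha>}"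

definition maximal_possible :: "'d list \<Rightarrow> ('d \<Rightarrow> 'a model) \<Rightarrow> 'a form set \<Rightarrow> 'a form set \<Rightarrow> bool" where
  "maximal_possible ds mm \<Delta> S \<longleftrightarrow>
     S \<subseteq> \<Delta> \<and> models_p ds mm S \<noteq> {} \<and>
     (\<forall>\<beta>\<in>\<Delta> - S. models_p ds mm (insert \<beta> S) = {})"

definition card_max_possible :: "'d list \<Rightarrow> ('d \<Rightarrow> 'a model) \<Rightarrow> 'a form set \<Rightarrow> 'a form set \<Rightarrow> bool" where
  "card_max_possible ds mm \<Delta> S \<longleftrightarrow>
     maximal_possible ds mm \<Delta> S \<and>
     (\<forall>S'. maximal_possible ds mm \<Delta> S' \<longrightarrow> card S' \<le> card S)"

end

theory Submission
  imports Defs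
begin

(* The likelihood of \<Delta> at a model w that satisfies k of the n formulas of \<Delta> is
   \<mu>^k (1-\<mu>)^(n-k). Dividing numerator and denominator by (1-\<mu>)^(n-K), where K is the largest
   such k over the models of nonzero probability, only the models with k = K survive as \<mu> \<rightarrow> 1.
   Hence p(\<alpha> | \<Delta>) is the relative weight of the \<alpha>-models among them, which is 1
   exactly when all of them satisfy \<alpha>. On the logical side, the maximal possible subsets of
   \<Delta> are sets of the form {\<beta> \<in> \<Delta>. w satisfies \<beta>} for possible w, and the cardinality-maximal
   ones are those coming from the surviving models. *)

definition satisfied :: "'a form set \<Rightarrow> 'a model \<Rightarrow> 'a form set" where
  "satisfied \<Delta> w = {\<beta> \<in> \<Delta>. sat w \<beta>}"

definition possible_models :: "'d list \<Rightarrow> ('d \<Rightarrow> 'a model) \<Rightarrow> 'a model set" where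
  "possible_models ds mm = {w. prob ds mm w \<noteq> 0}"

definition max_satisfied :: "'d list \<Rightarrow> ('d \<Rightarrow> 'a model) \<Rightarrow> 'a form set \<Rightarrow> nat" where
  "max_satisfied ds mm \<Delta> = Max ((\<lambda>w. card (satisfied \<Delta> w)) ` possible_models ds mm)"

definition preferred_models :: "'d list \<Rightarrow> ('d \<Rightarrow> 'a model) \<Rightarrow> 'a form set \<Rightarrow> 'a model set" where
  "preferred_models ds mm \<Delta> =
     {w \<in> possible_models ds mm. card (satisfied \<Delta> w) = max_satisfied ds mm \<Delta>}"

lemma prob_nonneg: "0 \<le> prob ds mm w"
  by (simp add: prob_def)

lemma prob_pos_iff: "0 < prob ds mm w \<longleftrightarrow> w \<in> possible_models ds mm"
  using prob_nonneg[of ds mm w] by (auto simp: possible_models_def)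

lemma possible_models_nonempty: "ds \<noteq> [] \<Longrightarrow> possible_models ds mm \<noteq> {}"
  by (cases ds) (auto simp: possible_models_def prob_def)

lemma models_p_eq: "models_p ds mm S = {w \<in> possible_models ds mm. \<forall>\<beta>\<in>S. sat w \<beta>}"
  by (auto simp: models_p_def models_def possible_models_def)

lemma finite_satisfied: "finite \<Delta> \<Longrightarrow> finite (satisfied \<Delta> w)"
  by (simp add: satisfied_def)

lemma card_satisfied_le: "finite \<Delta> \<Longrightarrow> card (satisfied \<Delta> w) \<le> card \<Delta>"
  by (auto simp: satisfied_def intro: card_mono)

lemma card_satisfied_le_max_satisfied:
  fixes mm :: "'d \<Rightarrow> ('a::finite) model"
  shows "w \<in> possible_models ds mm \<Longrightarrow> card (satisfied \<Delta> w) \<le> max_satisfied ds mm \<Delta>"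
  by (simp add: max_satisfied_def)

lemma max_satisfied_le_card:
  fixes mm :: "'d \<Rightarrow> ('a::finite) model"
  assumes "finite \<Delta>" "possible_models ds mm \<noteq> {}"
  shows "max_satisfied ds mm \<Delta> \<le> card \<Delta>"
  using assms card_satisfied_le[OF assms(1)] by (simp add: max_satisfied_def)

lemma preferred_models_nonempty:
  fixes mm :: "'d \<Rightarrow> ('a::finite) model"
  assumes "ds \<noteq> []"
  shows "preferred_models ds mm \<Delta> \<noteq> {}"
proof -
  have "max_satisfied ds mm \<Delta> \<in> (\<lambda>w. card (satisfied \<Delta> w)) ` possible_models ds mm"
    unfolding max_satisfied_def using possible_models_nonempty[OF assms] by (intro Max_in) auto
  then show ?thesis by (auto simp: preferred_models_def)
qed

lemma maximal_possible_obtain_satisfied: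
  assumes "maximal_possible ds mm \<Delta> S"
  obtains w where "w \<in> possible_models ds mm" "S = satisfied \<Delta> w"
proof -
  from assms obtain w where w: "w \<in> possible_models ds mm" "\<forall>\<beta>\<in>S. sat w \<beta>" and "S \<subseteq> \<Delta>"
    and maximal: "\<forall>\<beta>\<in>\<Delta> - S. models_p ds mm (insert \<beta> S) = {}"
    unfolding maximal_possible_def models_p_eq by auto
  have "satisfied \<Delta> w \<subseteq> S"
  proof
    fix \<beta> assume "\<beta> \<in> satisfied \<Delta> w"
    then have "w \<in> models_p ds mm (insert \<beta> S)"
      using w by (auto simp: models_p_eq satisfied_def)
    with maximal \<open>\<beta> \<in> satisfied \<Delta> w\<close> show "\<beta> \<in> S"
      by (auto simp: satisfied_def)
  qed
  with w \<open>S \<subseteq> \<Delta>\<close> have "S = satisfied \<Delta> w"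
    by (auto simp: satisfied_def)
  with w that show ?thesis by blast
qed

lemma satisfied_eq_if_preferred:
  fixes mm :: "'d \<Rightarrow> ('a::finite) model"
  assumes "finite \<Delta>" "w \<in> preferred_models ds mm \<Delta>" "w' \<in> possible_models ds mm"
    and "satisfied \<Delta> w \<subseteq> satisfied \<Delta> w'"
  shows "satisfied \<Delta> w' = satisfied \<Delta> w"
proof -
  have "card (satisfied \<Delta> w') \<le> card (satisfied \<Delta> w)"
    using card_satisfied_le_max_satisfied[OF assms(3)] assms(2) by (simp add: preferred_models_def)
  with card_seteq[OF finite_satisfied[OF assms(1)] assms(4)] show ?thesis by simp
qed

lemma maximal_possible_satisfied:
  fixes mm :: "'d \<Rightarrow> ('a::finite) model"
  assumes "finite \<Delta>" "w \<in> preferred_models ds mm \<Delta>"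
  shows "maximal_possible ds mm \<Delta> (satisfied \<Delta> w)"
  unfolding maximal_possible_def
proof (intro conjI ballI)
  show "models_p ds mm (satisfied \<Delta> w) \<noteq> {}"
    using assms(2) by (auto simp: models_p_eq satisfied_def preferred_models_def)
  fix \<beta> assume \<beta>: "\<beta> \<in> \<Delta> - satisfied \<Delta> w"
  show "models_p ds mm (insert \<beta> (satisfied \<Delta> w)) = {}"
  proof (rule ccontr)
    assume "models_p ds mm (insert \<beta> (satisfied \<Delta> w)) \<noteq> {}"
    then obtain w' where "w' \<in> possible_models ds mm"
      and "insert \<beta> (satisfied \<Delta> w) \<subseteq> satisfied \<Delta> w'"
      using \<beta> by (auto simp: models_p_eq satisfied_def)
    with satisfied_eq_if_preferred[OF assms] \<beta> show False by auto
  qed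
qed (simp add: satisfied_def)

lemma models_p_satisfied_subset_preferred:
  fixes mm :: "'d \<Rightarrow> ('a::finite) model"
  assumes "finite \<Delta>" "w \<in> preferred_models ds mm \<Delta>"
  shows "models_p ds mm (satisfied \<Delta> w) \<subseteq> preferred_models ds mm \<Delta>"
proof
  fix w' assume "w' \<in> models_p ds mm (satisfied \<Delta> w)"
  then have "w' \<in> possible_models ds mm" "satisfied \<Delta> w \<subseteq> satisfied \<Delta> w'"
    by (auto simp: models_p_eq satisfied_def)
  with satisfied_eq_if_preferred[OF assms] have "satisfied \<Delta> w' = satisfied \<Delta> w" .
  with assms(2) \<open>w' \<in> possible_models ds mm\<close> show "w' \<in> preferred_models ds mm \<Delta>"
    by (simp add: preferred_models_def)
qed

lemma card_max_possible_iff: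
  fixes mm :: "'d \<Rightarrow> ('a::finite) model"
  assumes "ds \<noteq> []" "finite \<Delta>"
  shows "card_max_possible ds mm \<Delta> S \<longleftrightarrow> (\<exists>w\<in>preferred_models ds mm \<Delta>. S = satisfied \<Delta> w)"
proof
  assume S: "card_max_possible ds mm \<Delta> S"
  then obtain w where w: "w \<in> possible_models ds mm" "S = satisfied \<Delta> w"
    unfolding card_max_possible_def by (auto elim: maximal_possible_obtain_satisfied)
  obtain w0 where "w0 \<in> preferred_models ds mm \<Delta>"
    using preferred_models_nonempty[OF assms(1)] by blast
  with S assms(2) have "card (satisfied \<Delta> w0) \<le> card S"
    unfolding card_max_possible_def by (blast intro: maximal_possible_satisfied)
  with w \<open>w0 \<in> _\<close> have "w \<in> preferred_models ds mm \<Delta>"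
    using card_satisfied_le_max_satisfied[OF w(1), of \<Delta>] by (simp add: preferred_models_def)
  with w show "\<exists>w\<in>preferred_models ds mm \<Delta>. S = satisfied \<Delta> w" by blast
next
  assume "\<exists>w\<in>preferred_models ds mm \<Delta>. S = satisfied \<Delta> w"
  then obtain w where w: "w \<in> preferred_models ds mm \<Delta>" "S = satisfied \<Delta> w" by blast
  have "card S' \<le> card S" if "maximal_possible ds mm \<Delta> S'" for S'
    using that w card_satisfied_le_max_satisfied
    by (auto elim!: maximal_possible_obtain_satisfied simp: preferred_models_def)
  with w assms(2) show "card_max_possible ds mm \<Delta> S"
    by (simp add: card_max_possible_def maximal_possible_satisfied)
qed

lemma card_max_possible_emp_cons_iff:
  fixes mm :: "'d \<Rightarrow> ('a::finite) model"
  assumes "ds \<noteq> []" "finite \<Delta>"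
  shows "(\<forall>S. card_max_possible ds mm \<Delta> S \<longrightarrow> emp_cons ds mm S \<alpha>) \<longleftrightarrow>
         (\<forall>w\<in>preferred_models ds mm \<Delta>. sat w \<alpha>)"
proof
  assume consequence: "\<forall>S. card_max_possible ds mm \<Delta> S \<longrightarrow> emp_cons ds mm S \<alpha>"
  show "\<forall>w\<in>preferred_models ds mm \<Delta>. sat w \<alpha>"
  proof
    fix w assume w: "w \<in> preferred_models ds mm \<Delta>"
    then have "emp_cons ds mm (satisfied \<Delta> w) \<alpha>"
      using consequence card_max_possible_iff[OF assms] by blast
    moreover have "w \<in> models_p ds mm (satisfied \<Delta> w)"
      using w by (auto simp: models_p_eq satisfied_def preferred_models_def)
    ultimately show "sat w \<alpha>"
      by (auto simp: emp_cons_def models_p_eq)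
  qed
next
  assume preferred_sat: "\<forall>w\<in>preferred_models ds mm \<Delta>. sat w \<alpha>"
  show "\<forall>S. card_max_possible ds mm \<Delta> S \<longrightarrow> emp_cons ds mm S \<alpha>"
  proof (intro allI impI)
    fix S assume "card_max_possible ds mm \<Delta> S"
    then obtain w where "w \<in> preferred_models ds mm \<Delta>" "S = satisfied \<Delta> w"
      using card_max_possible_iff[OF assms] by blast
    then have "models_p ds mm S \<subseteq> preferred_models ds mm \<Delta>"
      using models_p_satisfied_subset_preferred[OF assms(2)] by simp
    with preferred_sat show "emp_cons ds mm S \<alpha>"
      by (auto simp: emp_cons_def models_p_eq)
  qed
qed

lemma likset_eq:
  assumes "finite \<Delta>"
  shows "likset \<mu> \<Delta> w = \<mu> ^ card (satisfied \<Delta> w) * (1 - \<mu>) ^ (card \<Delta> - card (satisfied \<Delta> w))"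
proof -
  have "\<Delta> \<inter> - {\<beta>. sat w \<beta>} = \<Delta> - satisfied \<Delta> w"
    by (auto simp: satisfied_def)
  then have "card (\<Delta> \<inter> - {\<beta>. sat w \<beta>}) = card \<Delta> - card (satisfied \<Delta> w)"
    using assms by (simp add: card_Diff_subset finite_satisfied satisfied_def)
  then show ?thesis
    using assms by (simp add: likset_def lik_def prod.If_cases satisfied_def Int_def)
qed

lemma likset_mult_prob_eq:
  fixes ds :: "'d list" and mm :: "'d \<Rightarrow> ('a::finite) model" and w :: "'a model"
  assumes "finite \<Delta>"
  defines "K \<equiv> max_satisfied ds mm \<Delta>" and "k \<equiv> card (satisfied \<Delta> w)"
  shows "likset \<mu> \<Delta> w * prob ds mm w =
         (1 - \<mu>) ^ (card \<Delta> - K) * (\<mu> ^ k * (1 - \<mu>) ^ (K - k) * prob ds mm w)"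
proof (cases "w \<in> possible_models ds mm")
  case True
  then have "card \<Delta> - k = (card \<Delta> - K) + (K - k)"
    using card_satisfied_le_max_satisfied max_satisfied_le_card[OF assms(1)]
    unfolding K_def k_def by fastforce
  then show ?thesis
    using assms(1) by (simp add: likset_eq k_def power_add)
next
  case False
  then show ?thesis by (simp add: possible_models_def)
qed

lemma lik_tendsto: "((\<lambda>\<mu>. lik \<mu> \<alpha> w) \<longlongrightarrow> lik x \<alpha> w) (at x within S)"
  by (cases "sat w \<alpha>") (simp_all add: lik_def tendsto_intros)

lemma condp_tendsto:
  fixes mm :: "'d \<Rightarrow> ('a::finite) model"
  assumes "ds \<noteq> []" "finite \<Delta>"
  defines "P \<equiv> preferred_models ds mm \<Delta>"
  shows "((\<lambda>\<mu>. condp ds mm \<mu> \<alpha> \<Delta>) \<longlongrightarrow>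
           (\<Sum>w\<in>{w\<in>P. sat w \<alpha>}. prob ds mm w) / (\<Sum>w\<in>P. prob ds mm w)) (at_left 1)"
proof -
  define K where "K = max_satisfied ds mm \<Delta>"
  define h where "h \<mu> w = \<mu> ^ card (satisfied \<Delta> w) * (1 - \<mu>) ^ (K - card (satisfied \<Delta> w)) * prob ds mm w"
    for \<mu> :: real and w
  have h_1: "h 1 w = (if w \<in> P then prob ds mm w else 0)" for w
    using card_satisfied_le_max_satisfied[of w ds mm \<Delta>]
    by (auto simp: h_def K_def P_def preferred_models_def possible_models_def)
  have h_tendsto: "((\<lambda>\<mu>. h \<mu> w) \<longlongrightarrow> h 1 w) (at_left 1)" for w
    unfolding h_def by (intro tendsto_eq_intros) auto
  have "((\<lambda>\<mu>. (\<Sum>w\<in>UNIV. lik \<mu> \<alpha> w * h \<mu> w) / (\<Sum>w\<in>UNIV. h \<mu> w)) \<longlongrightarrow>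
          (\<Sum>w\<in>UNIV. lik 1 \<alpha> w * h 1 w) / (\<Sum>w\<in>UNIV. h 1 w)) (at_left 1)"
  proof (intro tendsto_intros lik_tendsto h_tendsto)
    have "0 < (\<Sum>w\<in>P. prob ds mm w)"
      using preferred_models_nonempty[OF assms(1)]
      by (intro sum_pos) (auto simp: P_def preferred_models_def prob_pos_iff)
    then show "(\<Sum>w\<in>UNIV. h 1 w) \<noteq> 0"
      by (simp add: h_1 sum.If_cases)
  qed
  moreover have "(\<Sum>w\<in>UNIV. lik 1 \<alpha> w * h 1 w) =
      (\<Sum>w\<in>UNIV. if w \<in> {w\<in>P. sat w \<alpha>} then prob ds mm w else 0)"
    by (rule sum.cong) (auto simp: h_1 lik_def)
  then have "(\<Sum>w\<in>UNIV. lik 1 \<alpha> w * h 1 w) = (\<Sum>w\<in>{w\<in>P. sat w \<alpha>}. prob ds mm w)"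
    by (simp add: sum.If_cases)
  moreover have "(\<Sum>w\<in>UNIV. h 1 w) = (\<Sum>w\<in>P. prob ds mm w)"
    by (simp add: h_1 sum.If_cases)
  moreover have "\<forall>\<^sub>F \<mu> in at_left 1.
      (\<Sum>w\<in>UNIV. lik \<mu> \<alpha> w * h \<mu> w) / (\<Sum>w\<in>UNIV. h \<mu> w) = condp ds mm \<mu> \<alpha> \<Delta>"
    using eventually_at_left_real[OF zero_less_one]
  proof eventually_elim
    case (elim \<mu>)
    have "condp ds mm \<mu> \<alpha> \<Delta> = ((1 - \<mu>) ^ (card \<Delta> - K) * (\<Sum>w\<in>UNIV. lik \<mu> \<alpha> w * h \<mu> w)) /
                                 ((1 - \<mu>) ^ (card \<Delta> - K) * (\<Sum>w\<in>UNIV. h \<mu> w))"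
      unfolding condp_def sum_distrib_left mult.assoc h_def K_def likset_mult_prob_eq[OF assms(2)]
      by (simp only: mult.left_commute)
    with elim show ?case by simp
  qed
  ultimately show ?thesis
    by (simp add: tendsto_cong)
qed

lemma sum_filter_divide_sum_eq_1_iff:
  fixes f :: "'a \<Rightarrow> 'b::linordered_field"
  assumes "finite A" "A \<noteq> {}" "\<And>x. x \<in> A \<Longrightarrow> 0 < f x"
  shows "(\<Sum>x\<in>{x\<in>A. P x}. f x) / (\<Sum>x\<in>A. f x) = 1 \<longleftrightarrow> (\<forall>x\<in>A. P x)"
proof -
  have "0 < (\<Sum>x\<in>A. f x)"
    using assms by (intro sum_pos)
  then have "(\<Sum>x\<in>{x\<in>A. P x}. f x) / (\<Sum>x\<in>A. f x) = 1 \<longleftrightarrow> (\<Sum>x\<in>A - {x\<in>A. P x}. f x) = 0"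
    using assms(1) by (simp add: sum_diff)
  also have "\<dots> \<longleftrightarrow> (\<forall>x\<in>A - {x\<in>A. P x}. f x = 0)"
    using assms by (intro sum_nonneg_eq_0_iff) (auto intro: less_imp_le)
  also have "\<dots> \<longleftrightarrow> (\<forall>x\<in>A. P x)"
    using assms(3) by force
  finally show ?thesis .
qed

theorem corollary4:
  fixes ds :: "'d list" and mm :: "'d \<Rightarrow> ('a::finite) model"
    and \<alpha> :: "'a form" and \<Delta> :: "'a form set"
  assumes "ds \<noteq> []" and "finite \<Delta>"
  shows "((\<lambda>\<mu>. condp ds mm \<mu> \<alpha> \<Delta>) \<longlongrightarrow> 1) (at_left 1) \<longleftrightarrow>
         (\<forall>S. card_max_possible ds mm \<Delta> S \<longrightarrow> emp_cons ds mm S \<alpha>)"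
proof -
  let ?P = "preferred_models ds mm \<Delta>"
  let ?limit = "(\<Sum>w\<in>{w\<in>?P. sat w \<alpha>}. prob ds mm w) / (\<Sum>w\<in>?P. prob ds mm w)"
  have limit: "((\<lambda>\<mu>. condp ds mm \<mu> \<alpha> \<Delta>) \<longlongrightarrow> ?limit) (at_left 1)"
    using condp_tendsto[OF assms] .
  have "((\<lambda>\<mu>. condp ds mm \<mu> \<alpha> \<Delta>) \<longlongrightarrow> 1) (at_left 1) \<longleftrightarrow> ?limit = 1"
    using tendsto_unique[OF trivial_limit_at_left_real limit, of 1] limit by (metis (lifting))
  also have "\<dots> \<longleftrightarrow> (\<forall>w\<in>?P. sat w \<alpha>)"
    using preferred_models_nonempty[OF assms(1)]
    by (intro sum_filter_divide_sum_eq_1_iff) (auto simp: preferred_models_def prob_pos_iff)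
  also have "\<dots> \<longleftrightarrow> (\<forall>S. card_max_possible ds mm \<Delta> S \<longrightarrow> emp_cons ds mm S \<alpha>)"
    using card_max_possible_emp_cons_iff[OF assms] by simp
  finally show ?thesis .
qed

end
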